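(* Fix an integer $q\geq2$ and let $\mathbb{X}=\{X_k,k\in\mathbb{N}\}$ be a sequence of centered independent non-deterministic real random variables (in particular each $X_k$ is integrable). Let $(F_n,n\ge1)$ be random variables given by $F_n=\mathbb{E}[F_n]+\sum_{p=1}^q Q_p(f_{p,n};\mathbb{X})$ with $f_{p,n}\in\ell^2_0(\mathbb{N})^{\odot p}$ for each $p\in\{1,\dots,q\}$. Assume $d>q$ is an integer such that the support of $f_{p,n}$ is contained in $\{1,\dots,d\}^p$ for all $p\in\{1,\dots,q\}$ and $n\ge1$. Suppose $F_n$ converges almost surely to $F$, where $F=\mathbb{E}[F]+\sum_{p=1}^q Q_p(f_p;\mathbb{X})$ with $f_p\in\ell^2_0(\mathbb{N})^{\odot p}$ for each $p\in\{1,\dots,q\}$. Then, as $n\to\infty$, $\mathbb{E}[F_n]\to\mathbb{E}[F]$, and for every $p\in\{1,\dots,q\}$, $Q_p(f_{p,n};\mathbb{X})$ converges almost surely to $Q_p(f_p;\mathbb{X})$.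
   Context: $\mathbb{N}=\{1,2,\dots\}$. For $p\geq1$, $\ell^2_0(\mathbb{N})^{\odot p}$ is the set of square-summable functions $f$ on $\mathbb{N}^p$ that are symmetric in their arguments and vanish on diagonals ($f(i_1,\dots,i_p)=0$ whenever $i_j=i_k$ for some $j\ne k$). For such $f$, $Q_p(f;\mathbb{X})=\sum_{i_1,\dots,i_p\in\mathbb{N}} f(i_1,\dots,i_p)X_{i_1}\cdots X_{i_p}$, whenever this sum is well defined (e.g. when $f$ has finite support). *)

theory Defs
  imports "HOL-Probability.Probability"
begin

text \<open>Kernels on \<open>\<nat>^p\<close> (with \<open>\<nat> = {1,2,...}\<close>) are represented as functions on
  lists of natural numbers; the value on a list of length \<open>p\<close> with all entries
  \<open>\<ge> 1\<close> is the value of the kernel at that tuple, and the function is \<open>0\<close> elsewhere.\<close>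

definition tuples :: "nat \<Rightarrow> nat set \<Rightarrow> nat list set" where
  "tuples p A = {is. length is = p \<and> set is \<subseteq> A}"

definition l2_sym0 :: "nat \<Rightarrow> (nat list \<Rightarrow> real) \<Rightarrow> bool" where
  "l2_sym0 p f \<longleftrightarrow>
     (\<forall>is. is \<notin> tuples p {1..} \<longrightarrow> f is = 0) \<and>
     (\<forall>is js. mset is = mset js \<longrightarrow> f is = f js) \<and>
     (\<forall>is. \<not> distinct is \<longrightarrow> f is = 0) \<and>
     (\<lambda>is. (f is)\<^sup>2) summable_on tuples p {1..}"

definition Q_partial :: "nat \<Rightarrow> (nat list \<Rightarrow> real) \<Rightarrow> (nat \<Rightarrow> 'a \<Rightarrow> real) \<Rightarrow> nat \<Rightarrow> 'a \<Rightarrow> real" where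
  "Q_partial p f X N \<omega> = (\<Sum>is\<in>tuples p {1..N}. f is * prod_list (map (\<lambda>i. X i \<omega>) is))"

definition Q :: "nat \<Rightarrow> (nat list \<Rightarrow> real) \<Rightarrow> (nat \<Rightarrow> 'a \<Rightarrow> real) \<Rightarrow> 'a \<Rightarrow> real" where
  "Q p f X \<omega> = lim (\<lambda>N. Q_partial p f X N \<omega>)"

definition Q_defined :: "nat \<Rightarrow> (nat list \<Rightarrow> real) \<Rightarrow> (nat \<Rightarrow> 'a \<Rightarrow> real) \<Rightarrow> 'a \<Rightarrow> bool" where
  "Q_defined p f X \<omega> \<longleftrightarrow> convergent (\<lambda>N. Q_partial p f X N \<omega>)"

end

theory Submission
  imports Defs "HOL-Combinatorics.Multiset_Permutations"
begin

text \<open>Both \<open>F n\<close> and the partial sums of \<open>F\<close> are multilinear polynomials in the \<open>X i\<close>: the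
  coefficient of the monomial \<open>\<Prod>i\<in>S. X i\<close> is \<open>card S!\<close> times the kernel of order \<open>card S\<close> at \<open>S\<close>,
  and all degrees are at most \<open>q\<close>. The theorem reduces to the uniqueness of such expansions in
  independent non-degenerate variables. Splitting off \<open>X m\<close>, both sides take the form
  \<open>a Y + X m * b Y\<close>, where \<open>Y\<close> is the family of the \<open>X i\<close> with \<open>i > m\<close>, independent of \<open>X m\<close>. If both sides have the same limit
  almost surely, Fubini yields two distinct values of \<open>X m\<close> for which this holds for almost every
  \<open>Y\<close>, and solving the two affine equations shows that the \<open>a\<close>-parts and the \<open>b\<close>-parts have the
  same limit almost surely. Peeling off \<open>X 1, \<dots>, X d\<close> shows that every coefficient of \<open>F n\<close>
  converges to the corresponding coefficient of \<open>F\<close>, and leaves series in the variables beyond \<open>d\<close>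
  converging to constants; by induction on the degree their non-constant coefficients vanish, so
  \<open>F\<close> only involves \<open>X 1, \<dots>, X d\<close>.\<close>

section \<open>Sequences with a common limit\<close>

definition same_limit :: "(nat \<Rightarrow> real) \<Rightarrow> (nat \<Rightarrow> real) \<Rightarrow> bool" where
  "same_limit u v \<longleftrightarrow> (\<exists>L. u \<longlonglongrightarrow> L \<and> v \<longlonglongrightarrow> L)"

lemma same_limit_iff_Cauchy: "same_limit u v \<longleftrightarrow> Cauchy u \<and> Cauchy v \<and> lim u = lim v"
  unfolding same_limit_def
  by (metis Cauchy_convergent_iff convergent_LIMSEQ_iff convergent_def limI)

lemma measurable_same_limit[measurable]:
  fixes f g :: "nat \<Rightarrow> 'b \<Rightarrow> real"
  assumes [measurable]: "\<And>n. f n \<in> borel_measurable N" "\<And>n. g n \<in> borel_measurable N"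
  shows "{x \<in> space N. same_limit (\<lambda>n. f n x) (\<lambda>n. g n x)} \<in> sets N"
  unfolding same_limit_iff_Cauchy by measurable

lemma same_limit_cong_eventually:
  assumes "eventually (\<lambda>n. u n = u' n) sequentially" "eventually (\<lambda>n. v n = v' n) sequentially"
  shows "same_limit u v \<longleftrightarrow> same_limit u' v'"
  unfolding same_limit_def using assms by (metis (mono_tags, lifting) tendsto_cong)

lemma same_limit_const_iff_tendsto: "same_limit u (\<lambda>_. L) \<longleftrightarrow> u \<longlonglongrightarrow> L"
  unfolding same_limit_def using LIMSEQ_unique by blast

lemma same_limit_tendsto: "same_limit u v \<Longrightarrow> u \<longlonglongrightarrow> L \<Longrightarrow> v \<longlonglongrightarrow> L"
  unfolding same_limit_def using LIMSEQ_unique by blast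

lemma same_limit_lincomb:
  assumes "same_limit u u'" "same_limit v v'"
  shows "same_limit (\<lambda>n. \<alpha> * u n + \<beta> * v n) (\<lambda>n. \<alpha> * u' n + \<beta> * v' n)"
proof -
  obtain K L where "u \<longlonglongrightarrow> K" "u' \<longlonglongrightarrow> K" "v \<longlonglongrightarrow> L" "v' \<longlonglongrightarrow> L"
    using assms unfolding same_limit_def by blast
  then show ?thesis
    unfolding same_limit_def by (intro exI[of _ "\<alpha> * K + \<beta> * L"] conjI tendsto_intros)
qed

lemma same_limit_affine_two_points:
  fixes x1 x2 :: real
  assumes "x1 \<noteq> x2"
    and "same_limit (\<lambda>n. a n + x1 * b n) (\<lambda>n. a' n + x1 * b' n)"
    and "same_limit (\<lambda>n. a n + x2 * b n) (\<lambda>n. a' n + x2 * b' n)"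
  shows "same_limit a a' \<and> same_limit b b'"
proof -
  have "x2 - x1 \<noteq> 0" using assms(1) by simp
  then have solve: "a = (\<lambda>n. x2 / (x2 - x1) * (a n + x1 * b n) + - x1 / (x2 - x1) * (a n + x2 * b n))"
      "b = (\<lambda>n. - 1 / (x2 - x1) * (a n + x1 * b n) + 1 / (x2 - x1) * (a n + x2 * b n))"
    for a b :: "nat \<Rightarrow> real"
    by (simp_all add: fun_eq_iff divide_simps; simp add: algebra_simps)+
  show ?thesis
    using same_limit_lincomb[OF assms(2,3), of "x2 / (x2 - x1)" "- x1 / (x2 - x1)"]
      same_limit_lincomb[OF assms(2,3), of "- 1 / (x2 - x1)" "1 / (x2 - x1)"]
    by (simp only: solve[symmetric])
qed

section \<open>Splitting off an independent variable\<close>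

lemma (in prob_space) nonconstant_AE_two_points:
  fixes h :: "'c \<Rightarrow> real"
  assumes W: "random_variable N W" and [measurable]: "h \<in> borel_measurable N"
    and nonconst: "\<not> (\<exists>c. AE \<omega> in M. h (W \<omega>) = c)"
    and P: "AE x in distr M N W. P x"
  shows "\<exists>x1 x2. h x1 \<noteq> h x2 \<and> P x1 \<and> P x2"
proof (rule ccontr)
  assume no: "\<not> ?thesis"
  interpret W: prob_space "distr M N W" by (rule prob_space_distr[OF W])
  obtain x1 where x1: "P x1"
    using eventually_happens'[OF W.ae_filter_bot P] by blast
  have "AE x in distr M N W. h x = h x1"
    using P by eventually_elim (use no x1 in blast)
  then have "AE \<omega> in M. h (W \<omega>) = h x1"
    by (subst (asm) AE_distr_iff) (use W in auto)
  with nonconst show False by blast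
qed

text \<open>By Fubini, for almost every value of \<open>W\<close> the relation holds for almost every value of \<open>Y\<close>;
  picking two such values with distinct \<open>h\<close> gives two affine equations to solve for the coefficients.\<close>
lemma (in prob_space) AE_same_limit_affine_indep:
  fixes h :: "'c \<Rightarrow> real" and a b a' b' :: "nat \<Rightarrow> 'c \<Rightarrow> real"
  assumes indep: "indep_var N1 W N2 Y" and h_meas[measurable]: "h \<in> borel_measurable N1"
    and nonconst: "\<not> (\<exists>c. AE \<omega> in M. h (W \<omega>) = c)"
    and [measurable]: "\<And>n. a n \<in> borel_measurable N2" "\<And>n. b n \<in> borel_measurable N2"
      "\<And>n. a' n \<in> borel_measurable N2" "\<And>n. b' n \<in> borel_measurable N2"
    and AE_affine: "AE \<omega> in M. same_limit (\<lambda>n. a n (Y \<omega>) + h (W \<omega>) * b n (Y \<omega>))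
                                       (\<lambda>n. a' n (Y \<omega>) + h (W \<omega>) * b' n (Y \<omega>))"
  shows "AE \<omega> in M. same_limit (\<lambda>n. a n (Y \<omega>)) (\<lambda>n. a' n (Y \<omega>)) \<and>
                    same_limit (\<lambda>n. b n (Y \<omega>)) (\<lambda>n. b' n (Y \<omega>))"
proof -
  have rv[measurable]: "random_variable N1 W" "random_variable N2 Y"
    and distr_pair: "distr M N1 W \<Otimes>\<^sub>M distr M N2 Y = distr M (N1 \<Otimes>\<^sub>M N2) (\<lambda>x. (W x, Y x))"
    using indep by (simp_all add: indep_var_distribution_eq)
  interpret W: prob_space "distr M N1 W" by (rule prob_space_distr[OF rv(1)])
  interpret Y: prob_space "distr M N2 Y" by (rule prob_space_distr[OF rv(2)])
  interpret WY: pair_prob_space "distr M N1 W" "distr M N2 Y" ..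
  define G where "G w y \<longleftrightarrow> same_limit (\<lambda>n. a n y + h w * b n y) (\<lambda>n. a' n y + h w * b' n y)" for w y
  have [measurable]: "{p \<in> space (N1 \<Otimes>\<^sub>M N2). G (fst p) (snd p)} \<in> sets (N1 \<Otimes>\<^sub>M N2)"
    unfolding G_def by measurable
  have "AE p in distr M (N1 \<Otimes>\<^sub>M N2) (\<lambda>x. (W x, Y x)). G (fst p) (snd p)"
    using AE_affine by (subst AE_distr_iff) (simp_all add: G_def)
  then have "AE w in distr M N1 W. AE y in distr M N2 Y. G w y"
    unfolding distr_pair[symmetric] using WY.AE_pair by fastforce
  then obtain w1 w2 where w12: "h w1 \<noteq> h w2" "AE y in distr M N2 Y. G w1 y" "AE y in distr M N2 Y. G w2 y"
    using nonconstant_AE_two_points[OF rv(1) h_meas nonconst] by blast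
  from w12(2,3) have "AE y in distr M N2 Y. same_limit (\<lambda>n. a n y) (\<lambda>n. a' n y) \<and> same_limit (\<lambda>n. b n y) (\<lambda>n. b' n y)"
    unfolding G_def by eventually_elim (rule same_limit_affine_two_points[OF w12(1)])
  then show ?thesis
    by (subst (asm) AE_distr_iff) auto
qed

section \<open>Multilinear polynomials\<close>

definition multilinear_poly :: "(nat set \<Rightarrow> real) \<Rightarrow> nat set \<Rightarrow> (nat \<Rightarrow> real) \<Rightarrow> real" where
  "multilinear_poly k A y = (\<Sum>S\<in>Pow A. k S * (\<Prod>i\<in>S. y i))"

lemma multilinear_poly_empty[simp]: "multilinear_poly k {} y = k {}"
  by (simp add: multilinear_poly_def)

lemma multilinear_poly_insert:
  assumes "finite A" "m \<notin> A"
  shows "multilinear_poly k (insert m A) y =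
    multilinear_poly k A y + y m * multilinear_poly (\<lambda>S. k (insert m S)) A y"
proof -
  have inj: "inj_on (insert m) (Pow A)" using assms(2) by (auto simp: inj_on_def)
  have "multilinear_poly k (insert m A) y =
      multilinear_poly k A y + (\<Sum>S\<in>insert m ` Pow A. k S * (\<Prod>i\<in>S. y i))"
    unfolding multilinear_poly_def Pow_insert using assms by (subst sum.union_disjoint) auto
  also have "(\<Sum>S\<in>insert m ` Pow A. k S * (\<Prod>i\<in>S. y i)) =
      (\<Sum>S\<in>Pow A. y m * (k (insert m S) * (\<Prod>i\<in>S. y i)))"
    unfolding sum.reindex[OF inj, unfolded comp_def]
  proof (rule sum.cong[OF refl])
    fix S assume "S \<in> Pow A"
    then have "finite S" "m \<notin> S" using assms finite_subset by auto
    then show "k (insert m S) * prod y (insert m S) = y m * (k (insert m S) * prod y S)"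
      by simp
  qed
  finally show ?thesis by (simp add: multilinear_poly_def sum_distrib_left)
qed

lemma multilinear_poly_restrict: "A \<subseteq> J \<Longrightarrow> multilinear_poly k A (restrict y J) = multilinear_poly k A y"
  unfolding multilinear_poly_def by (intro sum.cong refl arg_cong2[where f="(*)"] prod.cong) auto

lemma measurable_multilinear_poly[measurable]:
  assumes "finite A" "A \<subseteq> J"
  shows "multilinear_poly k A \<in> borel_measurable (PiM J (\<lambda>_. borel))"
proof -
  have "(\<lambda>y. y i) \<in> borel_measurable (PiM J (\<lambda>_. borel :: real measure))" if "i \<in> A" for i
    using that assms by (auto intro!: measurable_component_singleton)
  then show ?thesis
    unfolding multilinear_poly_def[abs_def] using assms
    by (intro borel_measurable_sum borel_measurable_times borel_measurable_const
        borel_measurable_prod) auto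
qed

lemma multilinear_poly_eq_const:
  assumes "finite A" "\<And>S. S \<subseteq> A \<Longrightarrow> S \<noteq> {} \<Longrightarrow> k S = 0"
  shows "multilinear_poly k A y = k {}"
proof -
  have "multilinear_poly k A y = (\<Sum>S\<in>{{}}. k S * (\<Prod>i\<in>S. y i))"
    unfolding multilinear_poly_def by (rule sum.mono_neutral_right) (use assms in auto)
  then show ?thesis by simp
qed

lemma multilinear_poly_by_degree:
  assumes "finite A" "\<And>S. S \<subseteq> A \<Longrightarrow> q < card S \<Longrightarrow> k S = 0"
  shows "multilinear_poly k A y =
    k {} + (\<Sum>p\<in>{1..q}. \<Sum>S\<in>{S \<in> Pow A. card S = p}. k S * (\<Prod>i\<in>S. y i))"
proof -
  have card_0: "{S. S \<subseteq> A \<and> card S = 0} = {{}}"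
    using assms(1) by (auto simp: card_eq_0_iff dest: finite_subset)
  have "multilinear_poly k A y = (\<Sum>S\<in>{S \<in> Pow A. card S \<le> q}. k S * (\<Prod>i\<in>S. y i))"
    unfolding multilinear_poly_def
    by (rule sum.mono_neutral_right) (use assms in \<open>auto simp: not_le\<close>)
  also have "\<dots> = (\<Sum>p\<in>{0..q}. \<Sum>S\<in>{S \<in> {S \<in> Pow A. card S \<le> q}. card S = p}. k S * (\<Prod>i\<in>S. y i))"
    by (rule sum.group[symmetric]) (use assms in auto)
  also have "\<dots> = (\<Sum>p\<in>{0..q}. \<Sum>S\<in>{S \<in> Pow A. card S = p}. k S * (\<Prod>i\<in>S. y i))"
    by (intro sum.cong refl) auto
  also have "\<dots> = k {} + (\<Sum>p\<in>{1..q}. \<Sum>S\<in>{S \<in> Pow A. card S = p}. k S * (\<Prod>i\<in>S. y i))"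
    by (simp add: sum.atLeast_Suc_atMost card_0)
  finally show ?thesis .
qed

lemma coeff_insert_vanish_above_degree:
  assumes "\<And>S. S \<subseteq> {m..} \<Longrightarrow> finite S \<Longrightarrow> q < card S \<Longrightarrow> k S = 0"
    and "m \<le> i" "T \<subseteq> {Suc i..}" "finite T" "q \<le> card T"
  shows "k (insert i T) = 0"
proof (rule assms(1))
  show "insert i T \<subseteq> {m..}"
    using assms(2,3) by (auto simp: subset_eq)
  have "i \<notin> T"
    using assms(3) by auto
  then show "q < card (insert i T)"
    using assms(4,5) by simp
qed (use assms(4) in simp)

definition coeffs_tendsto_on ::
    "(nat \<Rightarrow> nat set \<Rightarrow> real) \<Rightarrow> (nat set \<Rightarrow> real) \<Rightarrow> nat set \<Rightarrow> nat set \<Rightarrow> bool" where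
  "coeffs_tendsto_on c k A J \<longleftrightarrow>
    (\<forall>S \<subseteq> A. (\<lambda>n. c n S) \<longlonglongrightarrow> k S) \<and> (\<forall>S. S \<subseteq> J \<longrightarrow> finite S \<longrightarrow> \<not> S \<subseteq> A \<longrightarrow> k S = 0)"

lemma coeffs_tendsto_on_insert_min:
  assumes "coeffs_tendsto_on c k {Suc m..<Suc m+j} {Suc m..}"
    and "coeffs_tendsto_on (\<lambda>n S. c n (insert m S)) (\<lambda>S. k (insert m S)) {Suc m..<Suc m+j} {Suc m..}"
  shows "coeffs_tendsto_on c k {m..<m + Suc j} {m..}"
proof -
  from assms have lim_without_m: "\<And>S. S \<subseteq> {Suc m..<Suc m+j} \<Longrightarrow> (\<lambda>n. c n S) \<longlonglongrightarrow> k S"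
    and zero_without_m: "\<And>S. S \<subseteq> {Suc m..} \<Longrightarrow> finite S \<Longrightarrow> \<not> S \<subseteq> {Suc m..<Suc m+j} \<Longrightarrow> k S = 0"
    and lim_with_m: "\<And>S. S \<subseteq> {Suc m..<Suc m+j} \<Longrightarrow> (\<lambda>n. c n (insert m S)) \<longlonglongrightarrow> k (insert m S)"
    and zero_with_m: "\<And>S. S \<subseteq> {Suc m..} \<Longrightarrow> finite S \<Longrightarrow> \<not> S \<subseteq> {Suc m..<Suc m+j} \<Longrightarrow>
      k (insert m S) = 0"
    unfolding coeffs_tendsto_on_def by blast+
  have remove_m: "{m..<m + Suc j} - {m} = {Suc m..<Suc m + j}" "{m..} - {m} = {Suc m..}"
    by auto
  have "(\<lambda>n. c n S) \<longlonglongrightarrow> k S" if "S \<subseteq> {m..<m + Suc j}" for S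
  proof -
    have "S - {m} \<subseteq> {Suc m..<Suc m + j}"
      using that unfolding remove_m(1)[symmetric] by blast
    then show ?thesis
      using lim_with_m[of "S - {m}"] lim_without_m[of S] by (cases "m \<in> S") (simp_all add: insert_absorb)
  qed
  moreover have "k S = 0" if "S \<subseteq> {m..}" "finite S" "\<not> S \<subseteq> {m..<m + Suc j}" for S
  proof -
    have "m \<in> {m..<m + Suc j}" by simp
    then have "S - {m} \<subseteq> {Suc m..}" "\<not> S - {m} \<subseteq> {Suc m..<Suc m + j}"
      using that(1,3) unfolding remove_m[symmetric] by blast+
    then show ?thesis
      using zero_with_m[of "S - {m}"] zero_without_m[of S] \<open>finite S\<close>
      by (cases "m \<in> S") (simp_all add: insert_absorb)
  qed
  ultimately show ?thesis
    unfolding coeffs_tendsto_on_def by blast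
qed

section \<open>Finite chaoses as multilinear polynomials\<close>

lemma finite_tuples: "finite A \<Longrightarrow> finite (tuples p A)"
  unfolding tuples_def using finite_lists_length_eq[of A p] by (simp add: conj_commute)

lemma sum_tuples_symmetric:
  fixes g :: "nat list \<Rightarrow> real"
  assumes sym: "\<And>is js. mset is = mset js \<Longrightarrow> g is = g js"
    and diag: "\<And>is. \<not> distinct is \<Longrightarrow> g is = 0"
    and "finite A"
  shows "(\<Sum>is\<in>tuples p A. g is * prod_list (map y is)) =
    (\<Sum>S\<in>{S \<in> Pow A. card S = p}. fact p * g (sorted_list_of_set S) * (\<Prod>i\<in>S. y i))"
proof -
  let ?h = "\<lambda>is. g is * prod_list (map y is)"
  let ?D = "{is \<in> tuples p A. distinct is}"
  have "finite ?D" using finite_tuples[OF \<open>finite A\<close>, of p] by simp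
  have "(\<Sum>is\<in>tuples p A. ?h is) = sum ?h ?D"
    by (rule sum.mono_neutral_right) (use finite_tuples[OF \<open>finite A\<close>] diag in auto)
  also have "\<dots> = (\<Sum>S\<in>{S \<in> Pow A. card S = p}. sum ?h {is \<in> ?D. set is = S})"
    by (rule sum.group[symmetric])
      (use \<open>finite ?D\<close> \<open>finite A\<close> in \<open>auto simp: tuples_def distinct_card\<close>)
  also have "\<dots> = (\<Sum>S\<in>{S \<in> Pow A. card S = p}. fact p * g (sorted_list_of_set S) * (\<Prod>i\<in>S. y i))"
  proof (rule sum.cong[OF refl])
    fix S assume S: "S \<in> {S \<in> Pow A. card S = p}"
    then have "finite S" using \<open>finite A\<close> by (auto intro: finite_subset)
    have perms: "{is \<in> ?D. set is = S} = permutations_of_set S"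
      using S by (auto simp: tuples_def permutations_of_set_def distinct_card)
    have "?h is = g (sorted_list_of_set S) * (\<Prod>i\<in>S. y i)" if "is \<in> permutations_of_set S" for "is"
    proof -
      have "distinct is" "set is = S" using that by (auto simp: permutations_of_set_def)
      moreover from this have "mset is = mset (sorted_list_of_set S)"
        using \<open>finite S\<close> by (simp add: set_eq_iff_mset_eq_distinct[symmetric])
      ultimately show ?thesis by (simp add: sym[of "is"] prod.distinct_set_conv_list[symmetric])
    qed
    then show "sum ?h {is \<in> ?D. set is = S} = fact p * g (sorted_list_of_set S) * (\<Prod>i\<in>S. y i)"
      unfolding perms using S \<open>finite S\<close> by simp
  qed
  finally show ?thesis .
qed

lemma l2_sym0_sym: "mset is = mset js \<Longrightarrow> l2_sym0 p f \<Longrightarrow> f is = f js"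
  unfolding l2_sym0_def by blast

lemma l2_sym0_diag: "\<not> distinct is \<Longrightarrow> l2_sym0 p f \<Longrightarrow> f is = 0"
  unfolding l2_sym0_def by blast

lemma l2_sym0_tuples: "f is \<noteq> 0 \<Longrightarrow> l2_sym0 p f \<Longrightarrow> is \<in> tuples p {1..} \<and> distinct is"
  unfolding l2_sym0_def by blast

text \<open>The coefficient of \<open>\<Prod>i\<in>S. X i\<close> in \<open>c + (\<Sum>p\<in>{1..q}. Q p (g p) X)\<close>: by symmetry of the
  kernels, each of the \<open>card S!\<close> orderings of \<open>S\<close> contributes the same value.\<close>
definition chaos_coeff :: "nat \<Rightarrow> real \<Rightarrow> (nat \<Rightarrow> nat list \<Rightarrow> real) \<Rightarrow> nat set \<Rightarrow> real" where
  "chaos_coeff q c g S =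
    (if S = {} then c else if card S \<le> q then fact (card S) * g (card S) (sorted_list_of_set S) else 0)"

lemma chaos_coeff_above_degree: "q < card S \<Longrightarrow> chaos_coeff q c g S = 0"
  by (auto simp: chaos_coeff_def)

lemma chaos_coeff_set:
  assumes "p \<in> {1..q}" "l2_sym0 p (g p)" "distinct is" "length is = p"
  shows "chaos_coeff q c g (set is) = fact p * g p is"
proof -
  have "mset (sorted_list_of_set (set is)) = mset is"
    using assms(3) by (simp add: set_eq_iff_mset_eq_distinct[symmetric])
  then have "g p (sorted_list_of_set (set is)) = g p is"
    using assms(2) by (rule l2_sym0_sym)
  with assms show ?thesis
    by (auto simp: chaos_coeff_def distinct_card)
qed

lemma multilinear_chaos_coeff:
  assumes "\<And>p. p \<in> {1..q} \<Longrightarrow> l2_sym0 p (g p)"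
  shows "multilinear_poly (chaos_coeff q c g) {1..N} (\<lambda>i. X i \<omega>) =
    c + (\<Sum>p\<in>{1..q}. Q_partial p (g p) X N \<omega>)"
proof -
  have "multilinear_poly (chaos_coeff q c g) {1..N} (\<lambda>i. X i \<omega>) = chaos_coeff q c g {} +
      (\<Sum>p\<in>{1..q}. \<Sum>S\<in>{S \<in> Pow {1..N}. card S = p}. chaos_coeff q c g S * (\<Prod>i\<in>S. X i \<omega>))"
    by (rule multilinear_poly_by_degree) (simp_all add: chaos_coeff_above_degree)
  also have "\<dots> = c + (\<Sum>p\<in>{1..q}. \<Sum>S\<in>{S \<in> Pow {1..N}. card S = p}.
             fact p * g p (sorted_list_of_set S) * (\<Prod>i\<in>S. X i \<omega>))"
    by (intro arg_cong2[where f="(+)"] sum.cong refl) (auto simp: chaos_coeff_def)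
  also have "\<dots> = c + (\<Sum>p\<in>{1..q}. Q_partial p (g p) X N \<omega>)"
    unfolding Q_partial_def
    using assms by (intro arg_cong2[where f="(+)"] sum.cong refl sum_tuples_symmetric[symmetric])
      (auto intro: l2_sym0_sym l2_sym0_diag)
  finally show ?thesis .
qed

lemma Q_eq_Q_partial_if_supported:
  assumes "\<And>is. g is \<noteq> 0 \<Longrightarrow> set is \<subseteq> {1..d}"
  shows "Q p g X \<omega> = Q_partial p g X d \<omega>"
proof -
  have "Q_partial p g X N \<omega> = Q_partial p g X d \<omega>" if "d \<le> N" for N
    unfolding Q_partial_def
  proof (rule sum.mono_neutral_right)
    show "finite (tuples p {1..N})" by (simp add: finite_tuples)
    show "tuples p {1..d} \<subseteq> tuples p {1..N}" using that by (auto simp: tuples_def)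
    show "\<forall>is\<in>tuples p {1..N} - tuples p {1..d}. g is * prod_list (map (\<lambda>i. X i \<omega>) is) = 0"
    proof
      fix "is" assume "is \<in> tuples p {1..N} - tuples p {1..d}"
      then have "\<not> set is \<subseteq> {1..d}" by (simp add: tuples_def)
      then have "g is = 0" using assms by blast
      then show "g is * prod_list (map (\<lambda>i. X i \<omega>) is) = 0" by simp
    qed
  qed
  then have "(\<lambda>N. Q_partial p g X N \<omega>) \<longlonglongrightarrow> Q_partial p g X d \<omega>"
    by (intro tendsto_eventually eventually_sequentiallyI)
  then show ?thesis
    unfolding Q_def by (rule limI)
qed

lemma tendsto_Q_partial:
  assumes "\<And>is. is \<in> tuples p {1..N} \<Longrightarrow> (\<lambda>n. g n is) \<longlonglongrightarrow> g' is"
  shows "(\<lambda>n. Q_partial p (g n) X N \<omega>) \<longlonglongrightarrow> Q_partial p g' X N \<omega>"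
  unfolding Q_partial_def using assms by (intro tendsto_sum tendsto_mult_right)

lemma tendsto_kernel_if_tendsto_chaos_coeff:
  assumes "p \<in> {1..q}" "\<forall>\<^sub>F n in sequentially. l2_sym0 p (g n p)" "l2_sym0 p (h p)"
    and "is \<in> tuples p A" and coeff: "\<forall>S \<subseteq> A. (\<lambda>n. chaos_coeff q (c n) (g n) S) \<longlonglongrightarrow> chaos_coeff q c' h S"
  shows "(\<lambda>n. g n p is) \<longlonglongrightarrow> h p is"
proof (cases "distinct is")
  case True
  have "length is = p" "set is \<subseteq> A"
    using assms(4) by (auto simp: tuples_def)
  have "(\<lambda>n. chaos_coeff q (c n) (g n) (set is)) \<longlonglongrightarrow> chaos_coeff q c' h (set is)"
    using coeff \<open>set is \<subseteq> A\<close> by blast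
  moreover have "\<forall>\<^sub>F n in sequentially. chaos_coeff q (c n) (g n) (set is) = fact p * g n p is"
    using assms(2) by eventually_elim (use assms(1) True \<open>length is = p\<close> in \<open>simp add: chaos_coeff_set\<close>)
  ultimately have "(\<lambda>n. fact p * g n p is) \<longlonglongrightarrow> chaos_coeff q c' h (set is)"
    by (rule Lim_transform_eventually)
  then have "(\<lambda>n. fact p * g n p is) \<longlonglongrightarrow> fact p * h p is"
    using assms(1,3) True \<open>length is = p\<close> by (simp add: chaos_coeff_set)
  then have "(\<lambda>n. inverse (fact p) * (fact p * g n p is)) \<longlonglongrightarrow> inverse (fact p) * (fact p * h p is)"
    by (rule tendsto_mult_left)
  then show ?thesis by simp
next
  case False
  have "\<forall>\<^sub>F n in sequentially. g n p is = h p is"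
    using assms(2) by eventually_elim (use assms(3) False in \<open>simp add: l2_sym0_diag\<close>)
  then show ?thesis by (rule tendsto_eventually)
qed

lemma chaos_coeff_support:
  assumes "p \<in> {1..q}" "l2_sym0 p (h p)" and "h p is \<noteq> 0"
    and zero: "\<And>S. S \<subseteq> {1..} \<Longrightarrow> finite S \<Longrightarrow> \<not> S \<subseteq> A \<Longrightarrow> chaos_coeff q c h S = 0"
  shows "set is \<subseteq> A"
proof (rule ccontr)
  assume "\<not> set is \<subseteq> A"
  from assms(2,3) have "is \<in> tuples p {1..}" "distinct is"
    using l2_sym0_tuples by blast+
  then have "chaos_coeff q c h (set is) = fact p * h p is"
    using assms(1,2) by (simp add: chaos_coeff_set tuples_def)
  moreover have "chaos_coeff q c h (set is) = 0"
    using zero \<open>is \<in> tuples p {1..}\<close> \<open>\<not> set is \<subseteq> A\<close> by (simp add: tuples_def)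
  ultimately show False
    using assms(3) by simp
qed

lemma finite_chaos_eq_multilinear:
  assumes "\<forall>p\<in>{1..q}. l2_sym0 p (g p) \<and> (\<forall>is. g p is \<noteq> 0 \<longrightarrow> set is \<subseteq> {1..d})"
  shows "c + (\<Sum>p\<in>{1..q}. Q p (g p) X \<omega>) = multilinear_poly (chaos_coeff q c g) {1..d} (\<lambda>i. X i \<omega>)"
proof -
  have "Q p (g p) X \<omega> = Q_partial p (g p) X d \<omega>" if "p \<in> {1..q}" for p
    using assms that by (intro Q_eq_Q_partial_if_supported) blast
  moreover have "\<And>p. p \<in> {1..q} \<Longrightarrow> l2_sym0 p (g p)"
    using assms by blast
  ultimately show ?thesis
    by (simp only: multilinear_chaos_coeff) simp
qed

lemma tendsto_multilinear_chaos_coeff: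
  assumes "\<And>p. p \<in> {1..q} \<Longrightarrow> l2_sym0 p (g p)" "\<forall>p\<in>{1..q}. Q_defined p (g p) X \<omega>"
  shows "(\<lambda>N. multilinear_poly (chaos_coeff q c g) {1..N} (\<lambda>i. X i \<omega>)) \<longlonglongrightarrow>
    c + (\<Sum>p\<in>{1..q}. Q p (g p) X \<omega>)"
proof -
  have "(\<lambda>N. Q_partial p (g p) X N \<omega>) \<longlonglongrightarrow> Q p (g p) X \<omega>" if "p \<in> {1..q}" for p
    using assms(2) that unfolding Q_defined_def Q_def by (simp add: convergent_LIMSEQ_iff)
  then show ?thesis
    by (simp only: multilinear_chaos_coeff[OF assms(1)]) (intro tendsto_add tendsto_const tendsto_sum)
qed

lemma tendsto_Q_if_tendsto_chaos_coeff:
  assumes p: "p \<in> {1..q}"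
    and g: "\<forall>\<^sub>F n in sequentially. l2_sym0 p (g n p) \<and> (\<forall>is. g n p is \<noteq> 0 \<longrightarrow> set is \<subseteq> {1..d})"
    and h: "l2_sym0 p (h p)"
    and coeffs: "coeffs_tendsto_on (\<lambda>n. chaos_coeff q (c n) (g n)) (chaos_coeff q c' h) {1..d} {1..}"
  shows "(\<lambda>n. Q p (g n p) X \<omega>) \<longlonglongrightarrow> Q p (h p) X \<omega>"
proof -
  have coeff_lim: "\<forall>S \<subseteq> {1..d}. (\<lambda>n. chaos_coeff q (c n) (g n) S) \<longlonglongrightarrow> chaos_coeff q c' h S"
    and coeff_zero: "\<And>S. S \<subseteq> {1..} \<Longrightarrow> finite S \<Longrightarrow> \<not> S \<subseteq> {1..d} \<Longrightarrow> chaos_coeff q c' h S = 0"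
    using coeffs unfolding coeffs_tendsto_on_def by blast+
  have "\<forall>\<^sub>F n in sequentially. l2_sym0 p (g n p)"
    using g by (rule eventually_mono) blast
  then have "(\<lambda>n. g n p is) \<longlonglongrightarrow> h p is" if "is \<in> tuples p {1..d}" for "is"
    using tendsto_kernel_if_tendsto_chaos_coeff[OF p _ h that coeff_lim] by simp
  then have "(\<lambda>n. Q_partial p (g n p) X d \<omega>) \<longlonglongrightarrow> Q_partial p (h p) X d \<omega>"
    by (rule tendsto_Q_partial)
  moreover have "Q p (h p) X \<omega> = Q_partial p (h p) X d \<omega>"
    using chaos_coeff_support[OF p h _ coeff_zero] by (rule Q_eq_Q_partial_if_supported)
  moreover have "\<forall>\<^sub>F n in sequentially. Q_partial p (g n p) X d \<omega> = Q p (g n p) X \<omega>"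
    using g by eventually_elim (rule Q_eq_Q_partial_if_supported[symmetric], blast)
  ultimately show ?thesis
    by (simp add: Lim_transform_eventually)
qed

section \<open>Uniqueness of expansions in independent non-degenerate variables\<close>

locale indep_nondegenerate = prob_space M for M :: "'a measure" +
  fixes X :: "nat \<Rightarrow> 'a \<Rightarrow> real"
  assumes indep_X: "indep_vars (\<lambda>_. borel) X {1..}"
    and nonconst_X: "\<And>k. k \<ge> 1 \<Longrightarrow> \<not> (\<exists>c. AE \<omega> in M. X k \<omega> = c)"
begin

lemma AE_same_limit_multilinear_split:
  fixes c k :: "nat \<Rightarrow> nat set \<Rightarrow> real" and A B :: "nat \<Rightarrow> nat set"
  assumes "m \<ge> 1"
    and A: "\<And>n. finite (A n)" "\<And>n. A n \<subseteq> {m<..}" and B: "\<And>n. finite (B n)" "\<And>n. B n \<subseteq> {m<..}"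
    and AE_split: "AE \<omega> in M. same_limit (\<lambda>n. multilinear_poly (c n) (insert m (A n)) (\<lambda>i. X i \<omega>))
                                         (\<lambda>n. multilinear_poly (k n) (insert m (B n)) (\<lambda>i. X i \<omega>))"
  shows "AE \<omega> in M.
    same_limit (\<lambda>n. multilinear_poly (c n) (A n) (\<lambda>i. X i \<omega>))
               (\<lambda>n. multilinear_poly (k n) (B n) (\<lambda>i. X i \<omega>)) \<and>
    same_limit (\<lambda>n. multilinear_poly (\<lambda>S. c n (insert m S)) (A n) (\<lambda>i. X i \<omega>))
               (\<lambda>n. multilinear_poly (\<lambda>S. k n (insert m S)) (B n) (\<lambda>i. X i \<omega>))"
proof -
  define Y where "Y \<omega> = restrict (\<lambda>i. X i \<omega>) {m<..}" for \<omega>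
  have indep: "indep_var (PiM {m} (\<lambda>_. borel)) (\<lambda>\<omega>. restrict (\<lambda>i. X i \<omega>) {m})
      (PiM {m<..} (\<lambda>_. borel)) Y"
    unfolding Y_def by (rule indep_var_restrict[OF indep_X]) (use \<open>m \<ge> 1\<close> in auto)
  have eval_m: "(\<lambda>y. y m) \<in> borel_measurable (PiM {m} (\<lambda>_. borel :: real measure))"
    by (rule measurable_component_singleton) simp
  have nonconst: "\<not> (\<exists>c. AE \<omega> in M. restrict (\<lambda>i. X i \<omega>) {m} m = c)"
    using nonconst_X[OF \<open>m \<ge> 1\<close>] by simp
  have Y: "multilinear_poly k' C (Y \<omega>) = multilinear_poly k' C (\<lambda>i. X i \<omega>)"
    if "C \<subseteq> {m<..}" for k' C \<omega>
    unfolding Y_def using that by (rule multilinear_poly_restrict)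
  have split: "multilinear_poly k' (insert m C) (\<lambda>i. X i \<omega>) =
      multilinear_poly k' C (Y \<omega>) + X m \<omega> * multilinear_poly (\<lambda>S. k' (insert m S)) C (Y \<omega>)"
    if "finite C" "C \<subseteq> {m<..}" for k' C \<omega>
    using that by (subst multilinear_poly_insert) (auto simp: Y[OF that(2)])
  have "AE \<omega> in M.
      same_limit (\<lambda>n. multilinear_poly (c n) (A n) (Y \<omega>)) (\<lambda>n. multilinear_poly (k n) (B n) (Y \<omega>)) \<and>
      same_limit (\<lambda>n. multilinear_poly (\<lambda>S. c n (insert m S)) (A n) (Y \<omega>))
                 (\<lambda>n. multilinear_poly (\<lambda>S. k n (insert m S)) (B n) (Y \<omega>))"
    using AE_split A B
    by (intro AE_same_limit_affine_indep[where h="\<lambda>y. y m", OF indep eval_m nonconst]) (simp_all add: split)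
  then show ?thesis by (simp add: Y A B)
qed

lemma AE_tendsto_multilinear_split:
  assumes "m \<ge> 1" and lim: "AE \<omega> in M. (\<lambda>N. multilinear_poly k {m..N} (\<lambda>i. X i \<omega>)) \<longlonglongrightarrow> c"
  shows "AE \<omega> in M. (\<lambda>N. multilinear_poly k {Suc m..N} (\<lambda>i. X i \<omega>)) \<longlonglongrightarrow> c \<and>
    (\<lambda>N. multilinear_poly (\<lambda>S. k (insert m S)) {Suc m..N} (\<lambda>i. X i \<omega>)) \<longlonglongrightarrow> 0"
proof -
  define c0 where "c0 S = (if S = {} then c else 0)" for S :: "nat set"
  have c0: "multilinear_poly c0 (insert m {}) y = c" for y
    by (simp add: multilinear_poly_insert c0_def)
  have shift: "same_limit (\<lambda>N. multilinear_poly k (insert m {Suc m..N}) y) v \<longleftrightarrow>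
      same_limit (\<lambda>N. multilinear_poly k {m..N} y) v" for y v
    by (rule same_limit_cong_eventually)
      (auto simp: eventually_sequentially Icc_eq_insert_lb_nat intro!: exI[of _ m])
  have lim': "AE \<omega> in M. same_limit (\<lambda>N. multilinear_poly k (insert m {Suc m..N}) (\<lambda>i. X i \<omega>))
      (\<lambda>_. multilinear_poly c0 (insert m {}) (\<lambda>i. X i \<omega>))"
    using lim by (simp add: c0 shift same_limit_const_iff_tendsto)
  have "AE \<omega> in M. same_limit (\<lambda>N. multilinear_poly k {Suc m..N} (\<lambda>i. X i \<omega>))
        (\<lambda>_. multilinear_poly c0 {} (\<lambda>i. X i \<omega>)) \<and>
      same_limit (\<lambda>N. multilinear_poly (\<lambda>S. k (insert m S)) {Suc m..N} (\<lambda>i. X i \<omega>))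
        (\<lambda>_. multilinear_poly (\<lambda>S. c0 (insert m S)) {} (\<lambda>i. X i \<omega>))"
    by (rule AE_same_limit_multilinear_split[OF \<open>m \<ge> 1\<close> _ _ _ _ lim']) auto
  then show ?thesis
    by (simp add: same_limit_const_iff_tendsto c0_def)
qed

lemma AE_tendsto_multilinear_shift:
  assumes "m \<ge> 1" "m \<le> i" and lim: "AE \<omega> in M. (\<lambda>N. multilinear_poly k {m..N} (\<lambda>i. X i \<omega>)) \<longlonglongrightarrow> c"
  shows "AE \<omega> in M. (\<lambda>N. multilinear_poly k {i..N} (\<lambda>i. X i \<omega>)) \<longlonglongrightarrow> c"
  using \<open>m \<le> i\<close>
proof (induction rule: dec_induct)
  case (step i)
  with \<open>m \<ge> 1\<close> show ?case using AE_tendsto_multilinear_split[of i k c] by simp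
qed (fact lim)

lemma multilinear_const_coeff_eq_AE_limit:
  assumes "\<And>S. S \<subseteq> {m..} \<Longrightarrow> finite S \<Longrightarrow> S \<noteq> {} \<Longrightarrow> k S = 0"
    and lim: "AE \<omega> in M. (\<lambda>N. multilinear_poly k {m..N} (\<lambda>i. X i \<omega>)) \<longlonglongrightarrow> c"
  shows "k {} = c"
proof -
  have "k S = 0" if "S \<subseteq> {m..N}" "S \<noteq> {}" for S N
    using that by (intro assms(1)) (auto intro: finite_subset[OF _ finite_atLeastAtMost])
  then have "multilinear_poly k {m..N} y = k {}" for N y
    by (intro multilinear_poly_eq_const) auto
  with eventually_happens'[OF ae_filter_bot lim] show ?thesis
    using LIMSEQ_const_iff by auto
qed

text \<open>Induction on the degree: the coefficients containing the smallest index of \<open>S\<close> form a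
  series of lower degree converging to \<open>0\<close>.\<close>
lemma multilinear_coeff_vanish_if_AE_tendsto:
  assumes "m \<ge> 1" "\<And>S. S \<subseteq> {m..} \<Longrightarrow> finite S \<Longrightarrow> q < card S \<Longrightarrow> k S = 0"
    and lim: "AE \<omega> in M. (\<lambda>N. multilinear_poly k {m..N} (\<lambda>i. X i \<omega>)) \<longlonglongrightarrow> c"
    and S: "S \<subseteq> {m..}" "finite S" "S \<noteq> {}"
  shows "k S = 0"
  using assms
proof (induction q arbitrary: m k c S)
  case 0
  then show ?case by (simp add: card_gt_0_iff)
next
  case (Suc q)
  define i where "i = Min S"
  have i: "i \<in> S" "m \<le> i" "S - {i} \<subseteq> {Suc i..}"
    using Suc.prems(4-6) Min_in Min_le unfolding i_def by fastforce+
  define k' where "k' T = k (insert i T)" for T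
  have "AE \<omega> in M. (\<lambda>N. multilinear_poly k {i..N} (\<lambda>i. X i \<omega>)) \<longlonglongrightarrow> c"
    using AE_tendsto_multilinear_shift[OF Suc.prems(1) i(2) Suc.prems(3)] .
  then have lim': "AE \<omega> in M. (\<lambda>N. multilinear_poly k' {Suc i..N} (\<lambda>i. X i \<omega>)) \<longlonglongrightarrow> 0"
    using AE_tendsto_multilinear_split[of i k c] Suc.prems(1) i(2) unfolding k'_def by simp
  have deg': "k' T = 0" if "T \<subseteq> {Suc i..}" "finite T" "q < card T" for T
    unfolding k'_def
    by (rule coeff_insert_vanish_above_degree[OF Suc.prems(2) i(2) that(1,2) Suc_leI[OF that(3)]])
  have vanish': "k' T = 0" if "T \<subseteq> {Suc i..}" "finite T" "T \<noteq> {}" for T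
    using Suc.IH[OF _ deg' lim' that] by simp
  have "k' {} = 0"
    using multilinear_const_coeff_eq_AE_limit[OF vanish' lim'] .
  then have "k' (S - {i}) = 0"
    using vanish' i(3) Suc.prems(5) by (metis finite_Diff)
  then show ?case
    using i(1) unfolding k'_def by (simp add: insert_absorb)
qed

lemma multilinear_coeffs_if_AE_same_limit_const:
  assumes "m \<ge> 1" "\<And>S. S \<subseteq> {m..} \<Longrightarrow> finite S \<Longrightarrow> q < card S \<Longrightarrow> k S = 0"
    and same: "AE \<omega> in M. same_limit a (\<lambda>N. multilinear_poly k {m..N} (\<lambda>i. X i \<omega>))"
  shows "a \<longlonglongrightarrow> k {} \<and> (\<forall>S. S \<subseteq> {m..} \<longrightarrow> finite S \<longrightarrow> S \<noteq> {} \<longrightarrow> k S = 0)"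
proof -
  obtain L where L: "a \<longlonglongrightarrow> L"
    using eventually_happens'[OF ae_filter_bot same] unfolding same_limit_def by auto
  have lim: "AE \<omega> in M. (\<lambda>N. multilinear_poly k {m..N} (\<lambda>i. X i \<omega>)) \<longlonglongrightarrow> L"
    using same by eventually_elim (use L same_limit_tendsto in simp)
  have vanish: "k S = 0" if "S \<subseteq> {m..}" "finite S" "S \<noteq> {}" for S
    using multilinear_coeff_vanish_if_AE_tendsto[OF assms(1,2) lim that] .
  with multilinear_const_coeff_eq_AE_limit[OF vanish lim] L show ?thesis
    by auto
qed

lemma AE_same_limit_multilinear_split_first:
  assumes "m \<ge> 1"
    and "AE \<omega> in M. same_limit (\<lambda>n. multilinear_poly (c n) {m..<m + Suc j} (\<lambda>i. X i \<omega>))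
                               (\<lambda>N. multilinear_poly k {m..N} (\<lambda>i. X i \<omega>))"
  shows "AE \<omega> in M.
      same_limit (\<lambda>n. multilinear_poly (c n) {Suc m..<Suc m + j} (\<lambda>i. X i \<omega>))
                 (\<lambda>N. multilinear_poly k {Suc m..N} (\<lambda>i. X i \<omega>)) \<and>
      same_limit (\<lambda>n. multilinear_poly (\<lambda>S. c n (insert m S)) {Suc m..<Suc m + j} (\<lambda>i. X i \<omega>))
                 (\<lambda>N. multilinear_poly (\<lambda>S. k (insert m S)) {Suc m..N} (\<lambda>i. X i \<omega>))"
proof (rule AE_same_limit_multilinear_split)
  have insert_m: "insert m {Suc m..<Suc m + j} = {m..<m + Suc j}"
    by auto
  have "same_limit u (\<lambda>N. multilinear_poly k (insert m {Suc m..N}) y) \<longleftrightarrow>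
      same_limit u (\<lambda>N. multilinear_poly k {m..N} y)" for u y
    by (rule same_limit_cong_eventually)
      (auto simp: eventually_sequentially Icc_eq_insert_lb_nat intro!: exI[of _ m])
  then show "AE \<omega> in M.
      same_limit (\<lambda>n. multilinear_poly (c n) (insert m {Suc m..<Suc m + j}) (\<lambda>i. X i \<omega>))
                 (\<lambda>N. multilinear_poly k (insert m {Suc m..N}) (\<lambda>i. X i \<omega>))"
    unfolding insert_m using assms(2) by simp
qed (use assms(1) in auto)

lemma multilinear_coeffs_tendsto_if_AE_same_limit:
  assumes "m \<ge> 1" "\<And>S. S \<subseteq> {m..} \<Longrightarrow> finite S \<Longrightarrow> q < card S \<Longrightarrow> k S = 0"
    and "AE \<omega> in M. same_limit (\<lambda>n. multilinear_poly (c n) {m..<m+j} (\<lambda>i. X i \<omega>))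
                               (\<lambda>N. multilinear_poly k {m..N} (\<lambda>i. X i \<omega>))"
  shows "coeffs_tendsto_on c k {m..<m+j} {m..}"
  using assms
proof (induction j arbitrary: m c k)
  case 0
  have empty: "multilinear_poly (c n) {m..<m + 0} y = c n {}" for n y
    by simp
  have "(\<lambda>n. c n {}) \<longlonglongrightarrow> k {} \<and> (\<forall>S. S \<subseteq> {m..} \<longrightarrow> finite S \<longrightarrow> S \<noteq> {} \<longrightarrow> k S = 0)"
    using 0 unfolding empty by (rule multilinear_coeffs_if_AE_same_limit_const)
  then show ?case
    by (auto simp: coeffs_tendsto_on_def)
next
  case (Suc j m c k)
  have without_m: "AE \<omega> in M.
      same_limit (\<lambda>n. multilinear_poly (c n) {Suc m..<Suc m+j} (\<lambda>i. X i \<omega>))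
                 (\<lambda>N. multilinear_poly k {Suc m..N} (\<lambda>i. X i \<omega>))"
    and with_m: "AE \<omega> in M.
      same_limit (\<lambda>n. multilinear_poly (\<lambda>S. c n (insert m S)) {Suc m..<Suc m+j} (\<lambda>i. X i \<omega>))
                 (\<lambda>N. multilinear_poly (\<lambda>S. k (insert m S)) {Suc m..N} (\<lambda>i. X i \<omega>))"
    using AE_same_limit_multilinear_split_first[OF Suc.prems(1,3)] by (auto elim: AE_mp)
  have deg_without_m: "k S = 0" if "S \<subseteq> {Suc m..}" "finite S" "q < card S" for S
  proof (rule Suc.prems(2)[OF _ that(2,3)])
    show "S \<subseteq> {m..}" using that(1) by (auto simp: subset_eq)
  qed
  have deg_with_m: "k (insert m T) = 0" if "T \<subseteq> {Suc m..}" "finite T" "q < card T" for T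
    by (rule coeff_insert_vanish_above_degree[OF Suc.prems(2) order.refl that(1,2) less_imp_le[OF that(3)]])
  have "coeffs_tendsto_on c k {Suc m..<Suc m+j} {Suc m..}"
    by (rule Suc.IH[OF _ _ without_m]) (simp_all add: deg_without_m)
  moreover have "coeffs_tendsto_on (\<lambda>n S. c n (insert m S)) (\<lambda>S. k (insert m S))
      {Suc m..<Suc m+j} {Suc m..}"
    by (rule Suc.IH[OF _ deg_with_m with_m]) auto
  ultimately show ?case
    by (rule coeffs_tendsto_on_insert_min)
qed

lemma chaos_coeffs_tendsto_if_AE_tendsto:
  assumes G: "\<And>n. n \<ge> 1 \<Longrightarrow> AE \<omega> in M. G n \<omega> = c n + (\<Sum>p\<in>{1..q}. Q p (g n p) X \<omega>)"
    and G': "AE \<omega> in M. G' \<omega> = c' + (\<Sum>p\<in>{1..q}. Q p (h p) X \<omega>)"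
    and lim: "AE \<omega> in M. (\<lambda>n. G n \<omega>) \<longlonglongrightarrow> G' \<omega>"
    and h_defined: "\<And>p. p \<in> {1..q} \<Longrightarrow> AE \<omega> in M. Q_defined p (h p) X \<omega>"
    and g: "\<And>n. n \<ge> 1 \<Longrightarrow>
      \<forall>p\<in>{1..q}. l2_sym0 p (g n p) \<and> (\<forall>is. g n p is \<noteq> 0 \<longrightarrow> set is \<subseteq> {1..d})"
    and h: "\<And>p. p \<in> {1..q} \<Longrightarrow> l2_sym0 p (h p)"
  shows "coeffs_tendsto_on (\<lambda>n. chaos_coeff q (c n) (g n)) (chaos_coeff q c' h) {1..d} {1..}"
proof -
  have ivl: "{1..<1+d} = {1..d}" by auto
  have "AE \<omega> in M. \<forall>n\<ge>1. G n \<omega> = c n + (\<Sum>p\<in>{1..q}. Q p (g n p) X \<omega>)"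
    using G by (simp add: AE_all_countable)
  moreover have "AE \<omega> in M. \<forall>p\<in>{1..q}. Q_defined p (h p) X \<omega>"
    by (rule AE_finite_allI) (simp_all add: h_defined)
  ultimately have "AE \<omega> in M. same_limit
      (\<lambda>n. multilinear_poly (chaos_coeff q (c n) (g n)) {1..<1+d} (\<lambda>i. X i \<omega>))
      (\<lambda>N. multilinear_poly (chaos_coeff q c' h) {1..N} (\<lambda>i. X i \<omega>))"
    using G' lim
  proof eventually_elim
    case (elim \<omega>)
    have "\<forall>\<^sub>F n in sequentially. G n \<omega> =
        multilinear_poly (chaos_coeff q (c n) (g n)) {1..<1+d} (\<lambda>i. X i \<omega>)"
      unfolding ivl
    proof (rule eventually_sequentiallyI)
      fix n :: nat assume "n \<ge> 1"
      then have "G n \<omega> = c n + (\<Sum>p\<in>{1..q}. Q p (g n p) X \<omega>)"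
        using elim(1) by blast
      also have "\<dots> = multilinear_poly (chaos_coeff q (c n) (g n)) {1..d} (\<lambda>i. X i \<omega>)"
        using g[OF \<open>n \<ge> 1\<close>] by (rule finite_chaos_eq_multilinear)
      finally show "G n \<omega> = multilinear_poly (chaos_coeff q (c n) (g n)) {1..d} (\<lambda>i. X i \<omega>)" .
    qed
    with elim(4) have "(\<lambda>n. multilinear_poly (chaos_coeff q (c n) (g n)) {1..<1+d} (\<lambda>i. X i \<omega>))
        \<longlonglongrightarrow> G' \<omega>"
      by (rule Lim_transform_eventually)
    moreover have "(\<lambda>N. multilinear_poly (chaos_coeff q c' h) {1..N} (\<lambda>i. X i \<omega>)) \<longlonglongrightarrow> G' \<omega>"
      unfolding elim(3) using h elim(2) by (rule tendsto_multilinear_chaos_coeff)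
    ultimately show ?case
      unfolding same_limit_def by blast
  qed
  then show ?thesis
    unfolding ivl[symmetric]
    by (intro multilinear_coeffs_tendsto_if_AE_same_limit[where q=q]) (simp_all add: chaos_coeff_above_degree)
qed

end

theorem theorem1p4:
  fixes M :: "'a measure"
    and X :: "nat \<Rightarrow> 'a \<Rightarrow> real"
    and q d :: nat
    and Fn :: "nat \<Rightarrow> 'a \<Rightarrow> real" and F :: "'a \<Rightarrow> real"
    and fn :: "nat \<Rightarrow> nat \<Rightarrow> nat list \<Rightarrow> real" and f :: "nat \<Rightarrow> nat list \<Rightarrow> real"
  assumes "prob_space M"
    and "q \<ge> 2"
    and indep: "prob_space.indep_vars M (\<lambda>_. borel) X {1..}"
    and integr: "\<And>k. k \<ge> 1 \<Longrightarrow> integrable M (X k)"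
    and centered: "\<And>k. k \<ge> 1 \<Longrightarrow> integral\<^sup>L M (X k) = 0"
    and nondet: "\<And>k. k \<ge> 1 \<Longrightarrow> \<not> (\<exists>c. AE \<omega> in M. X k \<omega> = c)"
    and Fn_meas: "\<And>n. n \<ge> 1 \<Longrightarrow> Fn n \<in> borel_measurable M"
    and fn_l2: "\<And>p n. p \<in> {1..q} \<Longrightarrow> n \<ge> 1 \<Longrightarrow> l2_sym0 p (fn p n)"
    and Fn_repr: "\<And>n. n \<ge> 1 \<Longrightarrow>
       AE \<omega> in M. Fn n \<omega> = integral\<^sup>L M (Fn n) + (\<Sum>p\<in>{1..q}. Q p (fn p n) X \<omega>)"
    and "d > q"
    and supp: "\<And>p n is. p \<in> {1..q} \<Longrightarrow> n \<ge> 1 \<Longrightarrow> fn p n is \<noteq> 0 \<Longrightarrow> set is \<subseteq> {1..d}"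
    and F_meas: "F \<in> borel_measurable M"
    and F_int: "integrable M F"
    and f_l2: "\<And>p. p \<in> {1..q} \<Longrightarrow> l2_sym0 p (f p)"
    and f_wd: "\<And>p. p \<in> {1..q} \<Longrightarrow> AE \<omega> in M. Q_defined p (f p) X \<omega>"
    and F_repr: "AE \<omega> in M. F \<omega> = integral\<^sup>L M F + (\<Sum>p\<in>{1..q}. Q p (f p) X \<omega>)"
    and conv: "AE \<omega> in M. (\<lambda>n. Fn n \<omega>) \<longlonglongrightarrow> F \<omega>"
  shows "(\<lambda>n. integral\<^sup>L M (Fn n)) \<longlonglongrightarrow> integral\<^sup>L M F \<and>
     (\<forall>p\<in>{1..q}. AE \<omega> in M. (\<lambda>n. Q p (fn p n) X \<omega>) \<longlonglongrightarrow> Q p (f p) X \<omega>)"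
proof -
  interpret indep_nondegenerate M X
    by (intro indep_nondegenerate.intro indep_nondegenerate_axioms.intro) fact+
  have fn_kernels: "\<forall>p\<in>{1..q}. l2_sym0 p (fn p n) \<and> (\<forall>is. fn p n is \<noteq> 0 \<longrightarrow> set is \<subseteq> {1..d})"
    if "n \<ge> 1" for n
    using fn_l2 supp that by blast
  have coeffs: "coeffs_tendsto_on (\<lambda>n. chaos_coeff q (integral\<^sup>L M (Fn n)) (\<lambda>p. fn p n))
      (chaos_coeff q (integral\<^sup>L M F) f) {1..d} {1..}"
    using Fn_repr F_repr conv f_wd fn_kernels f_l2
    by (rule chaos_coeffs_tendsto_if_AE_tendsto[where g="\<lambda>n p. fn p n"])
  then have "(\<lambda>n. integral\<^sup>L M (Fn n)) \<longlonglongrightarrow> integral\<^sup>L M F"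
    unfolding coeffs_tendsto_on_def by (force simp: chaos_coeff_def)
  moreover have "(\<lambda>n. Q p (fn p n) X \<omega>) \<longlonglongrightarrow> Q p (f p) X \<omega>" if p: "p \<in> {1..q}" for p \<omega>
  proof (rule tendsto_Q_if_tendsto_chaos_coeff[where g="\<lambda>n p. fn p n", OF p _ f_l2[OF p] coeffs])
    show "\<forall>\<^sub>F n in sequentially. l2_sym0 p (fn p n) \<and> (\<forall>is. fn p n is \<noteq> 0 \<longrightarrow> set is \<subseteq> {1..d})"
      using fn_kernels p by (intro eventually_sequentiallyI) blast
  qed
  ultimately show ?thesis
    by blast
qed

end
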